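(* Let $\mathbf A$ be a finite relational structure with a majority polymorphism and a Maltsev polymorphism, and let $\mathcal A=\mathcal V(\mathrm{Alg}(\mathbf A))$. Let $\mathcal I=(V,\{\mathbb A_x\},\{R_{xy}\},w)$ be an instance of $\mathrm{CSP}(\mathcal A)$ as in the context with $|V|>1$, such that every domain $\mathbb A_x$ either has exactly one element or is subdirectly irreducible and prime. Then for every $x\in V$ there is a variable $y\ne x$ with $\theta_{xy}=0_{A_x}$, and for any such $y$ the relation $R_{yx}$ is the graph of a surjective homomorphism from $\mathbb A_y$ onto $\mathbb A_x$.
   Context: $\mathrm{Alg}(\mathbf A)$ is the algebra on $A$ whose operations are all polymorphisms of $\mathbf A$; $\mathcal V(\cdot)$ denotes the generated variety. An instance of $\mathrm{CSP}(\mathcal A)$ considered here is $(V,\{\mathbb A_x\}_{x\in V},\{R_{xy}\}_{(x,y)\in V^2},w)$: for each variable $x$ a finite algebra $\mathbb A_x\in\mathcal A$ with universe $A_x$; for each pair $(x,y)$ a binary relation $R_{xy}$ that is the universe of a subalgebra of $\mathbb A_x\times\mathbb A_y$, with $R_{xx}$ the equality relation $0_{A_x}$, $R_{yx}=R_{xy}^{-1}$, and for $x\ne y$, $R_{xy}$ subdirect (both projections onto). For $x\ne y$, $\theta_{xy}=\{(a,a')\in A_x^2\mid\exists b\in A_y:(a,b),(a',b)\in R_{xy}\}$, $\mu_x=\bigwedge_{y\ne x}\theta_{xy}$; $\mathbb A_x$ is prime if $\mu_x=0_{A_x}$. An algebra is subdirectly irreducible if it has at least two elements and the intersection of its nontrivial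 (non-equality) congruences is not the equality relation. *)

theory Defs
  imports Main
begin

definition rel_structure :: "'a set \<Rightarrow> (nat \<times> 'a list set) set \<Rightarrow> bool" where
  "rel_structure A Rels \<longleftrightarrow>
     (\<forall>(m, R) \<in> Rels. \<forall>xs \<in> R. length xs = m \<and> set xs \<subseteq> A)"

type_synonym 'a opsym = "nat \<times> ('a list \<Rightarrow> 'a)"

definition arity :: "'a opsym \<Rightarrow> nat" where
  "arity s = fst s"

definition is_pol :: "'a set \<Rightarrow> (nat \<times> 'a list set) set \<Rightarrow> 'a opsym \<Rightarrow> bool" where
  "is_pol A Rels s \<longleftrightarrow>
     (\<forall>xs. length xs = fst s \<and> set xs \<subseteq> A \<longrightarrow> snd s xs \<in> A) \<and>
     (\<forall>(m, R) \<in> Rels. \<forall>rs. length rs = fst s \<and> set rs \<subseteq> R \<longrightarrow>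
         map (\<lambda>i. snd s (map (\<lambda>r. r ! i) rs)) [0..<m] \<in> R)"

definition has_majority_pol :: "'a set \<Rightarrow> (nat \<times> 'a list set) set \<Rightarrow> bool" where
  "has_majority_pol A Rels \<longleftrightarrow>
     (\<exists>f. is_pol A Rels (3, f) \<and>
        (\<forall>x\<in>A. \<forall>y\<in>A. f [x, x, y] = x \<and> f [x, y, x] = x \<and> f [y, x, x] = x))"

definition has_maltsev_pol :: "'a set \<Rightarrow> (nat \<times> 'a list set) set \<Rightarrow> bool" where
  "has_maltsev_pol A Rels \<longleftrightarrow>
     (\<exists>f. is_pol A Rels (3, f) \<and>
        (\<forall>x\<in>A. \<forall>y\<in>A. f [x, y, y] = x \<and> f [y, y, x] = x))"

text \<open>The signature of Alg(A) consists of the polymorphism symbols.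
  An algebra of this signature: a nonempty carrier B and an interpretation I.\<close>

definition is_algebra :: "('f \<Rightarrow> bool) \<Rightarrow> ('f \<Rightarrow> nat) \<Rightarrow> 'b set \<Rightarrow> ('f \<Rightarrow> 'b list \<Rightarrow> 'b) \<Rightarrow> bool" where
  "is_algebra S ar B I \<longleftrightarrow> B \<noteq> {} \<and>
     (\<forall>f. S f \<longrightarrow> (\<forall>xs. length xs = ar f \<and> set xs \<subseteq> B \<longrightarrow> I f xs \<in> B))"

datatype 'f trm = Var nat | App 'f "'f trm list"

fun eval_trm :: "('f \<Rightarrow> 'b list \<Rightarrow> 'b) \<Rightarrow> (nat \<Rightarrow> 'b) \<Rightarrow> 'f trm \<Rightarrow> 'b" where
  "eval_trm I \<sigma> (Var n) = \<sigma> n"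
| "eval_trm I \<sigma> (App f ts) = I f (map (eval_trm I \<sigma>) ts)"

fun wf_trm :: "('f \<Rightarrow> bool) \<Rightarrow> ('f \<Rightarrow> nat) \<Rightarrow> 'f trm \<Rightarrow> bool" where
  "wf_trm S ar (Var n) = True"
| "wf_trm S ar (App f ts) = (S f \<and> length ts = ar f \<and> (\<forall>t \<in> set ts. wf_trm S ar t))"

definition satisfies_id :: "'b set \<Rightarrow> ('f \<Rightarrow> 'b list \<Rightarrow> 'b) \<Rightarrow> 'f trm \<Rightarrow> 'f trm \<Rightarrow> bool" where
  "satisfies_id B I s t \<longleftrightarrow> (\<forall>\<sigma>. (\<forall>n. \<sigma> n \<in> B) \<longrightarrow> eval_trm I \<sigma> s = eval_trm I \<sigma> t)"

text \<open>The algebra Alg(A): carrier A, each polymorphism symbol (n,f) interpreted by f.\<close>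
definition alg_ops :: "'a opsym \<Rightarrow> 'a list \<Rightarrow> 'a" where
  "alg_ops s xs = snd s xs"

text \<open>Membership in the variety V(Alg(A)) generated by Alg(A), defined (via Birkhoff's
  theorem) as: an algebra of the signature satisfying every (well-formed) identity
  that holds in Alg(A).\<close>
definition in_variety :: "'a set \<Rightarrow> (nat \<times> 'a list set) set \<Rightarrow> 'b set \<Rightarrow> ('a opsym \<Rightarrow> 'b list \<Rightarrow> 'b) \<Rightarrow> bool" where
  "in_variety A Rels B I \<longleftrightarrow>
     is_algebra (is_pol A Rels) arity B I \<and>
     (\<forall>s t. wf_trm (is_pol A Rels) arity s \<and> wf_trm (is_pol A Rels) arity t \<and>
            satisfies_id A alg_ops s t \<longrightarrow> satisfies_id B I s t)"

definition is_congruence :: "('f \<Rightarrow> bool) \<Rightarrow> ('f \<Rightarrow> nat) \<Rightarrow> 'b set \<Rightarrow> ('f \<Rightarrow> 'b list \<Rightarrow> 'b) \<Rightarrow> ('b \<times> 'b) set \<Rightarrow> bool" where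
  "is_congruence S ar B I \<theta> \<longleftrightarrow> equiv B \<theta> \<and>
     (\<forall>f. S f \<longrightarrow> (\<forall>ps. length ps = ar f \<and> set ps \<subseteq> \<theta> \<longrightarrow>
        (I f (map fst ps), I f (map snd ps)) \<in> \<theta>))"

definition subdirectly_irreducible :: "('f \<Rightarrow> bool) \<Rightarrow> ('f \<Rightarrow> nat) \<Rightarrow> 'b set \<Rightarrow> ('f \<Rightarrow> 'b list \<Rightarrow> 'b) \<Rightarrow> bool" where
  "subdirectly_irreducible S ar B I \<longleftrightarrow> 2 \<le> card B \<and>
     \<Inter> {\<theta>. is_congruence S ar B I \<theta> \<and> \<theta> \<noteq> Id_on B} \<noteq> Id_on B"

definition is_hom :: "('f \<Rightarrow> bool) \<Rightarrow> ('f \<Rightarrow> nat) \<Rightarrow> 'b set \<Rightarrow> ('f \<Rightarrow> 'b list \<Rightarrow> 'b) \<Rightarrow> 'c set \<Rightarrow> ('f \<Rightarrow> 'c list \<Rightarrow> 'c) \<Rightarrow> ('b \<Rightarrow> 'c) \<Rightarrow> bool" where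
  "is_hom S ar B I C J h \<longleftrightarrow> h ` B \<subseteq> C \<and>
     (\<forall>f. S f \<longrightarrow> (\<forall>xs. length xs = ar f \<and> set xs \<subseteq> B \<longrightarrow> h (I f xs) = J f (map h xs)))"

definition is_subalg_prod :: "('f \<Rightarrow> bool) \<Rightarrow> ('f \<Rightarrow> nat) \<Rightarrow> 'b set \<Rightarrow> ('f \<Rightarrow> 'b list \<Rightarrow> 'b) \<Rightarrow> 'c set \<Rightarrow> ('f \<Rightarrow> 'c list \<Rightarrow> 'c) \<Rightarrow> ('b \<times> 'c) set \<Rightarrow> bool" where
  "is_subalg_prod S ar B I C J R \<longleftrightarrow> R \<subseteq> B \<times> C \<and>
     (\<forall>f. S f \<longrightarrow> (\<forall>ps. length ps = ar f \<and> set ps \<subseteq> R \<longrightarrow>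
        (I f (map fst ps), J f (map snd ps)) \<in> R))"

definition theta_rel :: "'b set \<Rightarrow> ('b \<times> 'b) set \<Rightarrow> ('b \<times> 'b) set" where
  "theta_rel Ax Rxy = {(a, a'). a \<in> Ax \<and> a' \<in> Ax \<and> (\<exists>b. (a, b) \<in> Rxy \<and> (a', b) \<in> Rxy)}"

definition mu_rel :: "'v set \<Rightarrow> ('v \<Rightarrow> 'b set) \<Rightarrow> ('v \<Rightarrow> 'v \<Rightarrow> ('b \<times> 'b) set) \<Rightarrow> 'v \<Rightarrow> ('b \<times> 'b) set" where
  "mu_rel V Ax R x = \<Inter> {theta_rel (Ax x) (R x y) | y. y \<in> V \<and> y \<noteq> x}"

definition csp_instance :: "'a set \<Rightarrow> (nat \<times> 'a list set) set \<Rightarrow> 'v set \<Rightarrow> ('v \<Rightarrow> 'b set) \<Rightarrow>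
    ('v \<Rightarrow> 'a opsym \<Rightarrow> 'b list \<Rightarrow> 'b) \<Rightarrow> ('v \<Rightarrow> 'v \<Rightarrow> ('b \<times> 'b) set) \<Rightarrow> bool" where
  "csp_instance A Rels V Ax Ix R \<longleftrightarrow> finite V \<and>
     (\<forall>x\<in>V. finite (Ax x) \<and> in_variety A Rels (Ax x) (Ix x)) \<and>
     (\<forall>x\<in>V. R x x = Id_on (Ax x)) \<and>
     (\<forall>x\<in>V. \<forall>y\<in>V. R y x = (R x y)\<inverse>) \<and>
     (\<forall>x\<in>V. \<forall>y\<in>V. is_subalg_prod (is_pol A Rels) arity (Ax x) (Ix x) (Ax y) (Ix y) (R x y)) \<and>
     (\<forall>x\<in>V. \<forall>y\<in>V. x \<noteq> y \<longrightarrow> fst ` R x y = Ax x \<and> snd ` R x y = Ax y)"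

end

theory Submission
  imports Defs
begin

text \<open>A Maltsev polymorphism of \<open>A\<close> is a Maltsev term of the whole variety, so every relation
  \<open>R \<le> B \<times> C\<close> in it is rectangular and \<open>\<theta>\<^sub>x\<^sub>y\<close> is a congruence of \<open>\<A>\<^sub>x\<close>. If \<open>\<A>\<^sub>x\<close> is subdirectly
  irreducible, the meet \<open>\<mu>\<^sub>x = 0\<close> of these congruences can only be \<open>0\<close> if one of them is already
  \<open>0\<close>, since otherwise it would lie above the monolith; a one-element \<open>\<A>\<^sub>x\<close> is trivial.
  Finally \<open>\<theta>\<^sub>x\<^sub>y = 0\<close> says that \<open>R\<^sub>y\<^sub>x\<close> is single valued, and a single valued subdirect subalgebra
  of \<open>\<A>\<^sub>y \<times> \<A>\<^sub>x\<close> is the graph of a surjective homomorphism.\<close>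

definition maltsev_op :: "'b set \<Rightarrow> ('f \<Rightarrow> 'b list \<Rightarrow> 'b) \<Rightarrow> 'f \<Rightarrow> bool" where
  "maltsev_op B I g \<longleftrightarrow> (\<forall>a\<in>B. \<forall>c\<in>B. I g [a, c, c] = a \<and> I g [c, c, a] = a)"

lemma in_variety_satisfies_id:
  assumes "in_variety A Rels B I"
    and "wf_trm (is_pol A Rels) arity s" "wf_trm (is_pol A Rels) arity t"
    and "satisfies_id A alg_ops s t"
  shows "satisfies_id B I s t"
  using assms unfolding in_variety_def by blast

lemma in_variety_maltsev_op:
  assumes var: "in_variety A Rels B I" and pol: "is_pol A Rels (3, f)"
    and mal: "maltsev_op A alg_ops (3, f)"
  shows "maltsev_op B I (3, f)"
  unfolding maltsev_op_def
proof (intro ballI conjI)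
  fix a c assume "a \<in> B" "c \<in> B"
  define \<sigma> where "\<sigma> = (\<lambda>n::nat. if n = 0 then a else c)"
  have \<sigma>: "\<forall>n. \<sigma> n \<in> B" using \<open>a \<in> B\<close> \<open>c \<in> B\<close> by (simp add: \<sigma>_def)
  have wf: "wf_trm (is_pol A Rels) arity (App (3, f) [Var i, Var j, Var k])" for i j k
    using pol by (simp add: arity_def)
  have "satisfies_id A alg_ops (App (3, f) [Var 0, Var 1, Var 1]) (Var 0)"
    and "satisfies_id A alg_ops (App (3, f) [Var 1, Var 1, Var 0]) (Var 0)"
    using mal by (auto simp: satisfies_id_def maltsev_op_def)
  then have "satisfies_id B I (App (3, f) [Var 0, Var 1, Var 1]) (Var 0)"
    and "satisfies_id B I (App (3, f) [Var 1, Var 1, Var 0]) (Var 0)"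
    by (simp_all add: in_variety_satisfies_id[OF var wf])
  then have "eval_trm I \<sigma> (App (3, f) [Var 0, Var 1, Var 1]) = \<sigma> 0"
    and "eval_trm I \<sigma> (App (3, f) [Var 1, Var 1, Var 0]) = \<sigma> 0"
    using \<sigma> unfolding satisfies_id_def by fastforce+
  then show "I (3, f) [a, c, c] = a" "I (3, f) [c, c, a] = a"
    by (simp_all add: \<sigma>_def)
qed

lemma has_maltsev_pol_variety_maltsev_op:
  assumes "has_maltsev_pol A Rels"
  obtains g where "is_pol A Rels g" "arity g = 3"
    "\<And>B I. in_variety A Rels B I \<Longrightarrow> maltsev_op B I g"
proof -
  obtain f where "is_pol A Rels (3, f)" "maltsev_op A alg_ops (3, f)"
    using assms unfolding has_maltsev_pol_def maltsev_op_def alg_ops_def by auto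
  then show thesis
    using that in_variety_maltsev_op by (fastforce simp: arity_def)
qed

lemma is_subalg_prod_subset:
  "is_subalg_prod S ar B I C J R \<Longrightarrow> R \<subseteq> B \<times> C"
  unfolding is_subalg_prod_def by blast

lemma is_subalg_prod_closed:
  assumes "is_subalg_prod S ar B I C J R" and "S f" "length ps = ar f" "set ps \<subseteq> R"
  shows "(I f (map fst ps), J f (map snd ps)) \<in> R"
  using assms unfolding is_subalg_prod_def by blast

lemma Id_on_subset_theta_rel:
  assumes "fst ` R = B"
  shows "Id_on B \<subseteq> theta_rel B R"
  using assms unfolding theta_rel_def by force

lemma theta_rel_trans:
  assumes sub: "is_subalg_prod S ar B I C J R"
    and g: "S g" "ar g = 3" and mal: "maltsev_op B I g" "maltsev_op C J g"
  shows "trans (theta_rel B R)"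
proof (rule transI)
  fix a a' a'' assume "(a, a') \<in> theta_rel B R" "(a', a'') \<in> theta_rel B R"
  then obtain b b' where R: "(a, b) \<in> R" "(a', b) \<in> R" "(a', b') \<in> R" "(a'', b') \<in> R"
    and a: "a \<in> B" "a' \<in> B" "a'' \<in> B"
    unfolding theta_rel_def by blast
  have b: "b \<in> C" "b' \<in> C" using R is_subalg_prod_subset[OF sub] by auto
  have "(I g [a, a', a'], J g [b, b, b']) \<in> R"
    using is_subalg_prod_closed[OF sub g(1), of "[(a, b), (a', b), (a', b')]"] g(2) R by simp
  then have "(a, b') \<in> R"
    using mal a b unfolding maltsev_op_def by simp
  then show "(a, a'') \<in> theta_rel B R"
    using R(4) a unfolding theta_rel_def by blast
qed

lemma theta_rel_compatible:
  assumes sub: "is_subalg_prod S ar B I C J R"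
    and g: "S g" "length ps = ar g" and ps: "set ps \<subseteq> theta_rel B R"
  shows "(I g (map fst ps), I g (map snd ps)) \<in> theta_rel B R"
proof -
  have "\<forall>q\<in>set ps. \<exists>b. (fst q, b) \<in> R \<and> (snd q, b) \<in> R"
    using ps unfolding theta_rel_def by auto
  then obtain w where w: "\<And>q. q \<in> set ps \<Longrightarrow> (fst q, w q) \<in> R \<and> (snd q, w q) \<in> R"
    by metis
  have "(I g (map fst ps), J g (map w ps)) \<in> R"
    using is_subalg_prod_closed[OF sub g(1), of "map (\<lambda>q. (fst q, w q)) ps"] g(2) w
    by (force simp: comp_def)
  moreover have "(I g (map snd ps), J g (map w ps)) \<in> R"
    using is_subalg_prod_closed[OF sub g(1), of "map (\<lambda>q. (snd q, w q)) ps"] g(2) w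
    by (force simp: comp_def)
  ultimately show ?thesis
    using is_subalg_prod_subset[OF sub] unfolding theta_rel_def by blast
qed

lemma theta_rel_congruence:
  assumes sub: "is_subalg_prod S ar B I C J R" and dom: "fst ` R = B"
    and g: "S g" "ar g = 3" and mal: "maltsev_op B I g" "maltsev_op C J g"
  shows "is_congruence S ar B I (theta_rel B R)"
proof -
  have "equiv B (theta_rel B R)"
  proof (rule equivI)
    show "theta_rel B R \<subseteq> B \<times> B" unfolding theta_rel_def by blast
    show "refl_on B (theta_rel B R)"
      using Id_on_subset_theta_rel[OF dom] by (auto simp: refl_on_def theta_rel_def)
    show "sym (theta_rel B R)" unfolding theta_rel_def sym_def by blast
    show "trans (theta_rel B R)" by (rule theta_rel_trans[OF sub g mal])
  qed
  then show ?thesis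
    using theta_rel_compatible[OF sub] unfolding is_congruence_def by blast
qed

lemma subdirectly_irreducible_meet_eq_Id_on:
  assumes si: "subdirectly_irreducible S ar B I"
    and cong: "\<And>\<theta>. \<theta> \<in> \<Theta> \<Longrightarrow> is_congruence S ar B I \<theta>"
    and meet: "\<Inter> \<Theta> = Id_on B"
  shows "Id_on B \<in> \<Theta>"
proof (rule ccontr)
  let ?nontrivial = "{\<theta>. is_congruence S ar B I \<theta> \<and> \<theta> \<noteq> Id_on B}"
  assume "Id_on B \<notin> \<Theta>"
  then have "\<Inter> ?nontrivial \<subseteq> Id_on B"
    using cong meet by blast
  moreover have "Id_on B \<subseteq> \<theta>" if "is_congruence S ar B I \<theta>" for \<theta>
    using that unfolding is_congruence_def equiv_def refl_on_def by auto
  ultimately have "\<Inter> ?nontrivial = Id_on B" by blast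
  then show False
    using si unfolding subdirectly_irreducible_def by blast
qed

lemma theta_rel_eq_Id_on_single_valued:
  assumes "theta_rel B R = Id_on B" and "R \<subseteq> B \<times> C"
  shows "single_valued (R\<inverse>)"
  using assms unfolding single_valued_def theta_rel_def by blast

lemma single_valued_subalg_prod_graph_hom:
  assumes sub: "is_subalg_prod S ar C J B I Q" and sv: "single_valued Q"
    and dom: "fst ` Q = C" and ran: "snd ` Q = B"
  shows "\<exists>h. is_hom S ar C J B I h \<and> h ` C = B \<and> Q = {(c, h c) | c. c \<in> C}"
proof (intro exI conjI)
  define h where "h c = (THE b. (c, b) \<in> Q)" for c
  have Q_h: "(c, b) \<in> Q \<longleftrightarrow> c \<in> C \<and> b = h c" for c b
  proof
    assume cb: "(c, b) \<in> Q"
    then have "b = h c"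
      using sv unfolding h_def single_valued_def by (auto intro: the_equality[symmetric])
    then show "c \<in> C \<and> b = h c" using cb dom by force
  next
    assume "c \<in> C \<and> b = h c"
    then obtain b' where "(c, b') \<in> Q" using dom by force
    then show "(c, b) \<in> Q"
      using sv \<open>c \<in> C \<and> b = h c\<close> unfolding h_def single_valued_def by (auto intro: theI)
  qed
  show graph: "Q = {(c, h c) | c. c \<in> C}" using Q_h by auto
  show "h ` C = B" using ran graph by force
  show "is_hom S ar C J B I h"
    unfolding is_hom_def
  proof (intro conjI allI impI)
    show "h ` C \<subseteq> B" using ran graph by force
    fix f cs assume "S f" and cs: "length cs = ar f \<and> set cs \<subseteq> C"
    define ps where "ps = map (\<lambda>c. (c, h c)) cs"
    have "length ps = ar f" "set ps \<subseteq> Q" using cs Q_h by (auto simp: ps_def)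
    then have "(J f (map fst ps), I f (map snd ps)) \<in> Q"
      by (rule is_subalg_prod_closed[OF sub \<open>S f\<close>])
    moreover have "map fst ps = cs" "map snd ps = map h cs" by (simp_all add: ps_def comp_def)
    ultimately show "h (J f cs) = I f (map h cs)" by (simp add: Q_h)
  qed
qed

lemma csp_instanceD:
  assumes inst: "csp_instance A Rels V Ax Ix R" and x: "x \<in> V" and y: "y \<in> V"
  shows "in_variety A Rels (Ax x) (Ix x)"
    and "R y x = (R x y)\<inverse>"
    and "is_subalg_prod (is_pol A Rels) arity (Ax x) (Ix x) (Ax y) (Ix y) (R x y)"
    and "x \<noteq> y \<Longrightarrow> fst ` R x y = Ax x"
    and "x \<noteq> y \<Longrightarrow> snd ` R x y = Ax y"
proof -
  obtain var: "\<forall>x\<in>V. finite (Ax x) \<and> in_variety A Rels (Ax x) (Ix x)"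
    and converse: "\<forall>x\<in>V. \<forall>y\<in>V. R y x = (R x y)\<inverse>"
    and sub: "\<forall>x\<in>V. \<forall>y\<in>V. is_subalg_prod (is_pol A Rels) arity (Ax x) (Ix x) (Ax y) (Ix y) (R x y)"
    and subdirect: "\<forall>x\<in>V. \<forall>y\<in>V. x \<noteq> y \<longrightarrow> fst ` R x y = Ax x \<and> snd ` R x y = Ax y"
    using inst unfolding csp_instance_def by (elim conjE) (rule that; assumption)
  show "in_variety A Rels (Ax x) (Ix x)" using var x by blast
  show "R y x = (R x y)\<inverse>" by (rule converse[rule_format, OF x y])
  show "is_subalg_prod (is_pol A Rels) arity (Ax x) (Ix x) (Ax y) (Ix y) (R x y)"
    by (rule sub[rule_format, OF x y])
  show "fst ` R x y = Ax x" "snd ` R x y = Ax y" if "x \<noteq> y"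
    using subdirect[rule_format, OF x y that] by simp_all
qed

lemma csp_instance_theta_rel_congruence:
  assumes "has_maltsev_pol A Rels" and inst: "csp_instance A Rels V Ax Ix R"
    and "x \<in> V" "y \<in> V" "x \<noteq> y"
  shows "is_congruence (is_pol A Rels) arity (Ax x) (Ix x) (theta_rel (Ax x) (R x y))"
proof -
  note xy = csp_instanceD[OF inst \<open>x \<in> V\<close> \<open>y \<in> V\<close>]
    and yx = csp_instanceD[OF inst \<open>y \<in> V\<close> \<open>x \<in> V\<close>]
  obtain g where g: "is_pol A Rels g" "arity g = 3"
    and mal: "maltsev_op (Ax x) (Ix x) g" "maltsev_op (Ax y) (Ix y) g"
    using has_maltsev_pol_variety_maltsev_op[OF assms(1)] xy(1) yx(1) by metis
  show ?thesis
    by (rule theta_rel_congruence[OF xy(3) xy(4)[OF \<open>x \<noteq> y\<close>] g mal])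
qed

lemma csp_instance_ex_theta_rel_eq_Id_on:
  assumes mal: "has_maltsev_pol A Rels" and inst: "csp_instance A Rels V Ax Ix R"
    and "card V > 1" and x: "x \<in> V"
    and "card (Ax x) = 1 \<or>
      (subdirectly_irreducible (is_pol A Rels) arity (Ax x) (Ix x) \<and> mu_rel V Ax R x = Id_on (Ax x))"
  shows "\<exists>y\<in>V. y \<noteq> x \<and> theta_rel (Ax x) (R x y) = Id_on (Ax x)"
  using assms(5)
proof
  assume "card (Ax x) = 1"
  have "\<not> V \<subseteq> {x}" using \<open>card V > 1\<close> card_mono[of "{x}" V] by fastforce
  then obtain y where y: "y \<in> V" "x \<noteq> y" by blast
  have "theta_rel (Ax x) (R x y) \<subseteq> Id_on (Ax x)"
    using \<open>card (Ax x) = 1\<close> by (auto simp: card_1_singleton_iff theta_rel_def)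
  then have "theta_rel (Ax x) (R x y) = Id_on (Ax x)"
    using Id_on_subset_theta_rel[OF csp_instanceD(4)[OF inst x y]] by blast
  then show ?thesis using y by auto
next
  assume si_mu: "subdirectly_irreducible (is_pol A Rels) arity (Ax x) (Ix x) \<and>
    mu_rel V Ax R x = Id_on (Ax x)"
  have "Id_on (Ax x) \<in> {theta_rel (Ax x) (R x y) | y. y \<in> V \<and> y \<noteq> x}"
  proof (rule subdirectly_irreducible_meet_eq_Id_on)
    show "subdirectly_irreducible (is_pol A Rels) arity (Ax x) (Ix x)"
      using si_mu by (rule conjunct1)
    show "\<Inter> {theta_rel (Ax x) (R x y) | y. y \<in> V \<and> y \<noteq> x} = Id_on (Ax x)"
      using si_mu[THEN conjunct2] by (simp only: mu_rel_def)
    fix \<theta> assume "\<theta> \<in> {theta_rel (Ax x) (R x y) | y. y \<in> V \<and> y \<noteq> x}"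
    then show "is_congruence (is_pol A Rels) arity (Ax x) (Ix x) \<theta>"
      using csp_instance_theta_rel_congruence[OF mal inst x] by blast
  qed
  then show ?thesis by auto
qed

lemma csp_instance_graph_hom:
  assumes inst: "csp_instance A Rels V Ax Ix R" and "x \<in> V" "y \<in> V" "y \<noteq> x"
    and theta: "theta_rel (Ax x) (R x y) = Id_on (Ax x)"
  shows "\<exists>h. is_hom (is_pol A Rels) arity (Ax y) (Ix y) (Ax x) (Ix x) h \<and>
      h ` Ax y = Ax x \<and> R y x = {(b, h b) | b. b \<in> Ax y}"
proof (rule single_valued_subalg_prod_graph_hom)
  note xy = csp_instanceD[OF inst \<open>x \<in> V\<close> \<open>y \<in> V\<close>]
    and yx = csp_instanceD[OF inst \<open>y \<in> V\<close> \<open>x \<in> V\<close>]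
  show "is_subalg_prod (is_pol A Rels) arity (Ax y) (Ix y) (Ax x) (Ix x) (R y x)"
    and "fst ` R y x = Ax y" "snd ` R y x = Ax x"
    using yx \<open>y \<noteq> x\<close> by simp_all
  show "single_valued (R y x)"
    using theta_rel_eq_Id_on_single_valued[OF theta is_subalg_prod_subset[OF xy(3)]] xy(2)
    by simp
qed

theorem mainTheorem7:
  fixes A :: "'a set" and Rels :: "(nat \<times> 'a list set) set"
    and V :: "'v set" and Ax :: "'v \<Rightarrow> 'b set"
    and Ix :: "'v \<Rightarrow> 'a opsym \<Rightarrow> 'b list \<Rightarrow> 'b"
    and R :: "'v \<Rightarrow> 'v \<Rightarrow> ('b \<times> 'b) set"
  assumes "finite A" and "rel_structure A Rels"
    and "has_majority_pol A Rels" and "has_maltsev_pol A Rels"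
    and "csp_instance A Rels V Ax Ix R"
    and "card V > 1"
    and "\<forall>x\<in>V. card (Ax x) = 1 \<or>
           (subdirectly_irreducible (is_pol A Rels) arity (Ax x) (Ix x) \<and>
            mu_rel V Ax R x = Id_on (Ax x))"
  shows "\<forall>x\<in>V. (\<exists>y\<in>V. y \<noteq> x \<and> theta_rel (Ax x) (R x y) = Id_on (Ax x)) \<and>
           (\<forall>y\<in>V. y \<noteq> x \<and> theta_rel (Ax x) (R x y) = Id_on (Ax x) \<longrightarrow>
              (\<exists>h. is_hom (is_pol A Rels) arity (Ax y) (Ix y) (Ax x) (Ix x) h \<and>
                   h ` Ax y = Ax x \<and> R y x = {(b, h b) | b. b \<in> Ax y}))"
  using csp_instance_ex_theta_rel_eq_Id_on[OF assms(4,5,6)] csp_instance_graph_hom[OF assms(5)]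
    assms(7) by blast

end
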